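(* The group $W=\bigoplus_{i\in\mathbf{N}}W_i$ embeds in both $(\wr\mathbf{Z})^{\infty}$ and $(\mathbf{Z}\wr)^{\infty}$.
   Context: Restricted wreath product: $A\wr\mathbf{Z}=(\bigoplus_{i\in\mathbf{Z}}A)\rtimes\mathbf{Z}$. $W_0=1$, $W_i=W_{i-1}\wr\mathbf{Z}$; $(\mathbf{Z}\wr)^{\infty}$ is the ascending union of the $W_i$ with $W_i$ embedded in $W_{i+1}$ as the index-$0$ base summand. For permutation groups $(K,X)$, $(L,Y)$, the permutation wreath product $K\wr L\le\mathrm{Sym}(X\times Y)$ is generated by $(x,y)\mapsto(x\kappa,y)$, $(x,y')\mapsto(x,y')$ for $y'\neq y$ ($\kappa\in K$, $y\in Y$) and $(x,y)\mapsto(x,y\lambda)$ ($\lambda\in L$). $P_1=\mathbf{Z}$ on $\mathbf{Z}$ by translation, $P_{k+1}=\mathbf{Z}\wr P_k$ (permutation wreath product) with $P_k$ the top group; $(\wr\mathbf{Z})^{\infty}$ is the ascending union of the $P_k$. *)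

theory Defs
  imports "HOL-Algebra.Algebra"
begin

text \<open>(f,m) * (g,n) = (f * (m . g), m + n), where Z acts on the (finitely
  supported) base group by translation of the index: (m . g) i = g (i - m).\<close>
definition rwreath :: "('a, 'b) monoid_scheme \<Rightarrow> ((int \<Rightarrow> 'a) \<times> int) monoid" where
  "rwreath A =
    \<lparr>carrier = {x. fst x \<in> UNIV \<rightarrow> carrier A \<and> finite {i. fst x i \<noteq> \<one>\<^bsub>A\<^esub>}},
     monoid.mult = (\<lambda>x y. (\<lambda>i. fst x i \<otimes>\<^bsub>A\<^esub> fst y (i - snd x), snd x + snd y)),
     one = (\<lambda>_. \<one>\<^bsub>A\<^esub>, 0)\<rparr>"

definition transport :: "('a \<Rightarrow> 'c) \<Rightarrow> ('a, 'b) monoid_scheme \<Rightarrow> 'c monoid" where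
  "transport h G =
    \<lparr>carrier = h ` carrier G,
     monoid.mult = (\<lambda>x y. h (inv_into (carrier G) h x \<otimes>\<^bsub>G\<^esub> inv_into (carrier G) h y)),
     one = h \<one>\<^bsub>G\<^esub>\<rparr>"

text \<open>A uniform carrier type for the iterated wreath products W_i.\<close>
datatype wt = WOne | WT "int \<Rightarrow> wt" int

fun W :: "nat \<Rightarrow> wt monoid" where
  "W 0 = \<lparr>carrier = {WOne}, monoid.mult = (\<lambda>_ _. WOne), one = WOne\<rparr>"
| "W (Suc i) = transport (\<lambda>(f, n). WT f n) (rwreath (W i))"

definition W_emb :: "nat \<Rightarrow> wt \<Rightarrow> wt" where
  "W_emb i x = WT (\<lambda>k. if k = 0 then x else \<one>\<^bsub>W i\<^esub>) 0"

fun chain_emb :: "(nat \<Rightarrow> 'a \<Rightarrow> 'a) \<Rightarrow> nat \<Rightarrow> nat \<Rightarrow> 'a \<Rightarrow> 'a" where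
  "chain_emb e i 0 x = x"
| "chain_emb e i (Suc d) x = e (i + d) (chain_emb e i d x)"

definition dl_rel :: "(nat \<Rightarrow> ('a, 'b) monoid_scheme) \<Rightarrow> (nat \<Rightarrow> 'a \<Rightarrow> 'a)
    \<Rightarrow> ((nat \<times> 'a) \<times> (nat \<times> 'a)) set" where
  "dl_rel G e = {((i, x), (j, y)). x \<in> carrier (G i) \<and> y \<in> carrier (G j) \<and>
      (\<exists>k. i \<le> k \<and> j \<le> k \<and> chain_emb e i (k - i) x = chain_emb e j (k - j) y)}"

definition dirlim :: "(nat \<Rightarrow> ('a, 'b) monoid_scheme) \<Rightarrow> (nat \<Rightarrow> 'a \<Rightarrow> 'a)
    \<Rightarrow> (nat \<times> 'a) set monoid" where
  "dirlim G e =
    \<lparr>carrier = (SIGMA i:UNIV. carrier (G i)) // dl_rel G e,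
     monoid.mult = (\<lambda>A B. SOME C. \<exists>i x j y k. (i, x) \<in> A \<and> (j, y) \<in> B \<and> i \<le> k \<and> j \<le> k \<and>
        C = dl_rel G e `` {(k, chain_emb e i (k - i) x \<otimes>\<^bsub>G k\<^esub> chain_emb e j (k - j) y)}),
     one = dl_rel G e `` {(0, \<one>\<^bsub>G 0\<^esub>)}\<rparr>"

definition Zwr_inf :: "(nat \<times> wt) set monoid" where
  "Zwr_inf = dirlim W W_emb"

text \<open>Points of Z^k are integer lists of length k; a point (x,y) of X \<times> Y with
  X = Z and Y = Z^k is the list x # y.\<close>
definition pts :: "nat \<Rightarrow> int list set" where
  "pts k = {v. length v = k}"

definition pw_base :: "nat \<Rightarrow> int \<Rightarrow> int list \<Rightarrow> int list \<Rightarrow> int list" where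
  "pw_base k c y = (\<lambda>v \<in> pts (Suc k). if tl v = y then (hd v + c) # tl v else v)"

definition pw_top :: "nat \<Rightarrow> (int list \<Rightarrow> int list) \<Rightarrow> int list \<Rightarrow> int list" where
  "pw_top k l = (\<lambda>v \<in> pts (Suc k). hd v # l (tl v))"

definition pwr_Z :: "nat \<Rightarrow> (int list \<Rightarrow> int list) set \<Rightarrow> (int list \<Rightarrow> int list) set" where
  "pwr_Z k L = generate (BijGroup (pts (Suc k)))
      ({pw_base k c y | c y. y \<in> pts k} \<union> pw_top k ` L)"

fun P :: "nat \<Rightarrow> (int list \<Rightarrow> int list) set" where
  "P 0 = {\<lambda>v \<in> pts 0. v}"
| "P (Suc 0) = {(\<lambda>v \<in> pts 1. [hd v + c]) | c. True}"
| "P (Suc (Suc k)) = pwr_Z (Suc k) (P (Suc k))"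

definition P_grp :: "nat \<Rightarrow> (int list \<Rightarrow> int list) monoid" where
  "P_grp k = (BijGroup (pts k))\<lparr>carrier := P k\<rparr>"

definition wrZ_inf :: "(nat \<times> (int list \<Rightarrow> int list)) set monoid" where
  "wrZ_inf = dirlim (\<lambda>k. P_grp (Suc k)) (\<lambda>k. pw_top (Suc k))"

definition Wsum :: "(nat \<Rightarrow> wt) monoid" where
  "Wsum = sum_group UNIV W"

end

theory Submission
  imports Defs
begin

text \<open>
  Both embeddings come from a family of homomorphisms from W into the stages of the ascending
  union that is eventually compatible with the inclusions and eventually separates points.

  For (Z wr)^\<infinity>: W_(n+1) = W_n wr Z contains W_n \<times> W_n as its base summands 0 and 1, so
  x \<in> W is sent into W_(n+1) by placing the image of (x_0, ..., x_(n-1)) in W_n at 0 and x_n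
  at 1. Once x_n = 1 this is the image under the index-0 inclusion W_n \<le> W_(n+1).

  For (wr Z)^\<infinity>: W_i acts faithfully on Z^i, W_(i+1) = W_i wr Z acting on Z^i \<times> Z. Every
  element of W_(i+1) is a translation of the last coordinate times finitely many permutations
  supported on single fibres of the last coordinate, and P_(k+1) = Z wr P_k contains the copy of
  P_k acting on any such fibre; by induction the image of W_i lies in P_i. Letting x_i act on
  the fibre of Z^(n+1) where the last coordinate is i embeds W_0 \<oplus> ... \<oplus> W_n into P_(n+1),
  compatibly with the top inclusions P_(n+1) \<le> P_(n+2).
\<close>

section \<open>Monomorphisms into ascending unions\<close>

lemma chain_emb_add:
  "chain_emb e i (a + b) x = chain_emb e (i + a) b (chain_emb e i a x)"
  by (induction b) (simp_all add: add.assoc)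

context
  fixes G :: "nat \<Rightarrow> ('a, 'b) monoid_scheme" and e :: "nat \<Rightarrow> 'a \<Rightarrow> 'a"
  assumes monoid_G: "\<And>i. monoid (G i)"
    and hom_e: "\<And>i. e i \<in> hom (G i) (G (Suc i))"
begin

abbreviation up :: "nat \<Rightarrow> nat \<Rightarrow> 'a \<Rightarrow> 'a" where
  "up i k x \<equiv> chain_emb e i (k - i) x"

lemma up_up: "i \<le> k \<Longrightarrow> k \<le> K \<Longrightarrow> up k K (up i k x) = up i K x"
  using chain_emb_add[of e i "k - i" "K - k" x] by simp

lemma chain_emb_carrier: "x \<in> carrier (G i) \<Longrightarrow> chain_emb e i d x \<in> carrier (G (i + d))"
  by (induction d) (auto intro: hom_in_carrier[OF hom_e])

lemma up_carrier: "x \<in> carrier (G i) \<Longrightarrow> i \<le> k \<Longrightarrow> up i k x \<in> carrier (G k)"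
  using chain_emb_carrier[of x i "k - i"] by simp

lemma up_mult:
  assumes "x \<in> carrier (G i)" "y \<in> carrier (G i)" "i \<le> k"
  shows "up i k (x \<otimes>\<^bsub>G i\<^esub> y) = up i k x \<otimes>\<^bsub>G k\<^esub> up i k y"
proof -
  have "chain_emb e i d (x \<otimes>\<^bsub>G i\<^esub> y) = chain_emb e i d x \<otimes>\<^bsub>G (i + d)\<^esub> chain_emb e i d y" for d
    by (induction d) (auto simp: hom_mult[OF hom_e] chain_emb_carrier assms(1,2))
  from this[of "k - i"] show ?thesis
    using assms(3) by simp
qed

lemma up_up_mult:
  assumes "x \<in> carrier (G i)" "y \<in> carrier (G j)" "i \<le> k" "j \<le> k" "k \<le> K"
  shows "up k K (up i k x \<otimes>\<^bsub>G k\<^esub> up j k y) = up i K x \<otimes>\<^bsub>G K\<^esub> up j K y"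
  using assms by (simp add: up_mult up_carrier up_up)

lemma dl_relI:
  "x \<in> carrier (G i) \<Longrightarrow> y \<in> carrier (G j) \<Longrightarrow> i \<le> k \<Longrightarrow> j \<le> k \<Longrightarrow> up i k x = up j k y
    \<Longrightarrow> ((i, x), (j, y)) \<in> dl_rel G e"
  by (auto simp: dl_rel_def)

lemma dl_relE:
  assumes "((i, x), (j, y)) \<in> dl_rel G e"
  obtains k where "x \<in> carrier (G i)" "y \<in> carrier (G j)" "i \<le> k" "j \<le> k"
    "\<And>K. k \<le> K \<Longrightarrow> up i K x = up j K y"
proof -
  obtain k where k: "i \<le> k" "j \<le> k" "up i k x = up j k y" and "x \<in> carrier (G i)" "y \<in> carrier (G j)"
    using assms by (auto simp: dl_rel_def)
  moreover have "up i K x = up j K y" if "k \<le> K" for K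
    using up_up[OF k(1) that, of x] up_up[OF k(2) that, of y] k(3) by simp
  ultimately show thesis
    using that by blast
qed

lemma equiv_dl_rel: "equiv (SIGMA i:UNIV. carrier (G i)) (dl_rel G e)"
proof (rule equivI)
  show "refl_on (SIGMA i:UNIV. carrier (G i)) (dl_rel G e)"
    by (auto simp: refl_on_def dl_rel_def)
  show "sym (dl_rel G e)"
    by (auto simp: sym_def dl_rel_def)
  show "trans (dl_rel G e)"
  proof (rule transI)
    fix a b c
    assume ab: "(a, b) \<in> dl_rel G e" and bc: "(b, c) \<in> dl_rel G e"
    obtain i x j y l z where abc: "a = (i, x)" "b = (j, y)" "c = (l, z)"
      by (cases a, cases b, cases c) auto
    obtain k1 where k1: "x \<in> carrier (G i)" "i \<le> k1" "\<And>K. k1 \<le> K \<Longrightarrow> up i K x = up j K y"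
      using ab abc by (auto elim: dl_relE)
    obtain k2 where k2: "z \<in> carrier (G l)" "l \<le> k2" "\<And>K. k2 \<le> K \<Longrightarrow> up j K y = up l K z"
      using bc abc by (auto elim: dl_relE)
    show "(a, c) \<in> dl_rel G e"
      unfolding abc(1,3) using k1(1,2) k2(1,2) k1(3)[of "max k1 k2"] k2(3)[of "max k1 k2"]
      by (intro dl_relI[of _ _ _ _ "max k1 k2"]) auto
  qed
qed (auto simp: dl_rel_def)

lemma dl_rel_mult:
  assumes "((i, x), (i', x')) \<in> dl_rel G e" "((j, y), (j', y')) \<in> dl_rel G e"
    and "i \<le> k" "j \<le> k" "i' \<le> k'" "j' \<le> k'"
  shows "((k, up i k x \<otimes>\<^bsub>G k\<^esub> up j k y), (k', up i' k' x' \<otimes>\<^bsub>G k'\<^esub> up j' k' y')) \<in> dl_rel G e"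
proof -
  obtain k1 where x: "x \<in> carrier (G i)" "x' \<in> carrier (G i')" "i \<le> k1"
    and xx': "\<And>K. k1 \<le> K \<Longrightarrow> up i K x = up i' K x'"
    using assms(1) by (elim dl_relE) blast
  obtain k2 where y: "y \<in> carrier (G j)" "y' \<in> carrier (G j')"
    and yy': "\<And>K. k2 \<le> K \<Longrightarrow> up j K y = up j' K y'"
    using assms(2) by (elim dl_relE) blast
  define K where "K = max (max k1 k2) (max k k')"
  have "up k K (up i k x \<otimes>\<^bsub>G k\<^esub> up j k y) = up i K x \<otimes>\<^bsub>G K\<^esub> up j K y"
    using x y assms(3,4) by (simp add: up_up_mult K_def)
  also have "\<dots> = up i' K x' \<otimes>\<^bsub>G K\<^esub> up j' K y'"
    using xx' yy' by (simp add: K_def)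
  also have "\<dots> = up k' K (up i' k' x' \<otimes>\<^bsub>G k'\<^esub> up j' k' y')"
    using x y assms(5,6) by (simp add: up_up_mult K_def)
  finally show ?thesis
    using x y assms(3-6) up_carrier
    by (intro dl_relI[of _ _ _ _ K]) (auto simp: K_def intro: monoid.m_closed[OF monoid_G])
qed

lemma dirlim_mult_class:
  assumes "x \<in> carrier (G i)" "y \<in> carrier (G j)" "i \<le> k" "j \<le> k"
  shows "dl_rel G e `` {(i, x)} \<otimes>\<^bsub>dirlim G e\<^esub> dl_rel G e `` {(j, y)}
    = dl_rel G e `` {(k, up i k x \<otimes>\<^bsub>G k\<^esub> up j k y)}"
proof -
  let ?R = "dl_rel G e"
  let ?P = "\<lambda>C. \<exists>i' x' j' y' k'. (i', x') \<in> ?R `` {(i, x)} \<and> (j', y') \<in> ?R `` {(j, y)} \<and>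
    i' \<le> k' \<and> j' \<le> k' \<and> C = ?R `` {(k', up i' k' x' \<otimes>\<^bsub>G k'\<^esub> up j' k' y')}"
  have "?P (?R `` {(k, up i k x \<otimes>\<^bsub>G k\<^esub> up j k y)})"
    using assms by (blast intro: dl_relI)
  moreover have "C = ?R `` {(k, up i k x \<otimes>\<^bsub>G k\<^esub> up j k y)}" if "?P C" for C
    using that dl_rel_mult[OF _ _ assms(3,4)] equiv_class_eq[OF equiv_dl_rel] by blast
  ultimately have "(SOME C. ?P C) = ?R `` {(k, up i k x \<otimes>\<^bsub>G k\<^esub> up j k y)}"
    by (rule some_equality)
  then show ?thesis
    by (simp add: dirlim_def)
qed

lemma mon_dirlimI:
  fixes S :: "('c, 'd) monoid_scheme" and \<phi> :: "nat \<Rightarrow> 'c \<Rightarrow> 'a"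
  assumes "monoid S"
    and hom_\<phi>: "\<And>n. \<phi> n \<in> hom S (G n)"
    and compatible: "\<And>x. x \<in> carrier S \<Longrightarrow> \<forall>\<^sub>F n in sequentially. \<phi> (Suc n) x = e n (\<phi> n x)"
    and separating: "\<And>x y. x \<in> carrier S \<Longrightarrow> y \<in> carrier S \<Longrightarrow>
      (\<forall>\<^sub>F n in sequentially. \<phi> n x = \<phi> n y) \<Longrightarrow> x = y"
  shows "\<exists>h. h \<in> mon S (dirlim G e)"
proof -
  let ?R = "dl_rel G e"
  define N where "N x = (SOME N. \<forall>n\<ge>N. \<phi> (Suc n) x = e n (\<phi> n x))" for x
  have \<phi>_Suc: "\<phi> (Suc n) x = e n (\<phi> n x)" if "x \<in> carrier S" "N x \<le> n" for x n
    using someI_ex[OF compatible[OF that(1), unfolded eventually_sequentially]] that(2)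
    by (simp add: N_def)
  have up_\<phi>: "up n K (\<phi> n x) = \<phi> K x" if "x \<in> carrier S" "N x \<le> n" "n \<le> K" for x n K
  proof -
    have "chain_emb e n d (\<phi> n x) = \<phi> (n + d) x" for d
      using that(2) by (induction d) (simp_all add: \<phi>_Suc[OF that(1)])
    from this[of "K - n"] show ?thesis
      using that(3) by simp
  qed
  define h where "h x = ?R `` {(N x, \<phi> (N x) x)}" for x
  have h_level: "h x = ?R `` {(n, \<phi> n x)}" if "x \<in> carrier S" "N x \<le> n" for x n
    unfolding h_def using that hom_in_carrier[OF hom_\<phi>] up_\<phi>
    by (intro equiv_class_eq[OF equiv_dl_rel] dl_relI[of _ _ _ _ n]) auto
  have "h \<in> hom S (dirlim G e)"
  proof (rule homI)
    fix x
    assume "x \<in> carrier S"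
    then show "h x \<in> carrier (dirlim G e)"
      using hom_in_carrier[OF hom_\<phi>] by (auto simp: h_def dirlim_def intro!: quotientI)
  next
    fix x y
    assume x: "x \<in> carrier S" and y: "y \<in> carrier S"
    define n where "n = max (N (x \<otimes>\<^bsub>S\<^esub> y)) (max (N x) (N y))"
    have xy: "x \<otimes>\<^bsub>S\<^esub> y \<in> carrier S"
      using x y by (rule monoid.m_closed[OF \<open>monoid S\<close>])
    have "h x \<otimes>\<^bsub>dirlim G e\<^esub> h y = ?R `` {(n, \<phi> n x)} \<otimes>\<^bsub>dirlim G e\<^esub> ?R `` {(n, \<phi> n y)}"
      using h_level[OF x, of n] h_level[OF y, of n] by (simp add: n_def)
    also have "\<dots> = ?R `` {(n, \<phi> n x \<otimes>\<^bsub>G n\<^esub> \<phi> n y)}"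
      using x y hom_in_carrier[OF hom_\<phi>] dirlim_mult_class[of "\<phi> n x" n "\<phi> n y" n n] by simp
    also have "\<dots> = h (x \<otimes>\<^bsub>S\<^esub> y)"
      using h_level[OF xy, of n] x y hom_mult[OF hom_\<phi>] by (simp add: n_def)
    finally show "h (x \<otimes>\<^bsub>S\<^esub> y) = h x \<otimes>\<^bsub>dirlim G e\<^esub> h y"
      by simp
  qed
  moreover have "inj_on h (carrier S)"
  proof (rule inj_onI)
    fix x y
    assume x: "x \<in> carrier S" and y: "y \<in> carrier S" and "h x = h y"
    then have "((N x, \<phi> (N x) x), (N y, \<phi> (N y) y)) \<in> ?R"
      using eq_equiv_class_iff[OF equiv_dl_rel] hom_in_carrier[OF hom_\<phi>] by (simp add: h_def)
    then obtain k where "N x \<le> k" "N y \<le> k" "\<And>K. k \<le> K \<Longrightarrow> \<phi> K x = \<phi> K y"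
      using up_\<phi> x y by (elim dl_relE) auto
    then show "x = y"
      using separating[OF x y] by (auto simp: eventually_sequentially)
  qed
  ultimately show ?thesis
    by (auto simp: mon_def)
qed

end

section \<open>The iterated wreath products W_i\<close>

lemma transport_carrier: "carrier (transport h G) = h ` carrier G"
  by (simp add: transport_def)

lemma transport_one: "\<one>\<^bsub>transport h G\<^esub> = h \<one>\<^bsub>G\<^esub>"
  by (simp add: transport_def)

lemma transport_mult:
  "inj_on h (carrier G) \<Longrightarrow> x \<in> carrier G \<Longrightarrow> y \<in> carrier G \<Longrightarrow>
    h x \<otimes>\<^bsub>transport h G\<^esub> h y = h (x \<otimes>\<^bsub>G\<^esub> y)"
  by (simp add: transport_def inv_into_f_f)

lemma group_transport:
  assumes "group G" and inj: "inj_on h (carrier G)"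
  shows "group (transport h G)"
proof -
  interpret G: group G by fact
  show ?thesis
  proof (rule groupI)
    fix x y z
    assume "x \<in> carrier (transport h G)" "y \<in> carrier (transport h G)" "z \<in> carrier (transport h G)"
    then obtain a b c where "a \<in> carrier G" "b \<in> carrier G" "c \<in> carrier G" "x = h a" "y = h b" "z = h c"
      by (auto simp: transport_carrier)
    then show "x \<otimes>\<^bsub>transport h G\<^esub> y \<in> carrier (transport h G)"
      and "x \<otimes>\<^bsub>transport h G\<^esub> y \<otimes>\<^bsub>transport h G\<^esub> z =
        x \<otimes>\<^bsub>transport h G\<^esub> (y \<otimes>\<^bsub>transport h G\<^esub> z)"
      and "\<one>\<^bsub>transport h G\<^esub> \<otimes>\<^bsub>transport h G\<^esub> x = x"
      by (auto simp: transport_mult[OF inj] transport_carrier transport_one G.m_assoc)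
    have "h (inv\<^bsub>G\<^esub> a) \<otimes>\<^bsub>transport h G\<^esub> x = \<one>\<^bsub>transport h G\<^esub>"
      using \<open>a \<in> carrier G\<close> \<open>x = h a\<close> by (simp add: transport_mult[OF inj] transport_one)
    then show "\<exists>x'\<in>carrier (transport h G). x' \<otimes>\<^bsub>transport h G\<^esub> x = \<one>\<^bsub>transport h G\<^esub>"
      using \<open>a \<in> carrier G\<close> by (auto simp: transport_carrier)
  qed (simp add: transport_carrier transport_one)
qed

lemma rwreath_carrier:
  "(f, m) \<in> carrier (rwreath A) \<longleftrightarrow> (\<forall>i. f i \<in> carrier A) \<and> finite {i. f i \<noteq> \<one>\<^bsub>A\<^esub>}"
  by (auto simp: rwreath_def)

lemma rwreath_mult: "(f, m) \<otimes>\<^bsub>rwreath A\<^esub> (g, n) = (\<lambda>i. f i \<otimes>\<^bsub>A\<^esub> g (i - m), m + n)"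
  by (simp add: rwreath_def)

lemma rwreath_one: "\<one>\<^bsub>rwreath A\<^esub> = (\<lambda>_. \<one>\<^bsub>A\<^esub>, 0)"
  by (simp add: rwreath_def)

lemma finite_support_shift:
  fixes g :: "int \<Rightarrow> 'a"
  assumes "finite {i. g i \<noteq> c}"
  shows "finite {i. g (i - m) \<noteq> c}"
proof -
  have "{i. g (i - m) \<noteq> c} = (\<lambda>j. j + m) ` {i. g i \<noteq> c}"
    by (auto simp: image_iff intro!: exI[of _ "_ - m"])
  with assms show ?thesis
    by simp
qed

lemma group_rwreath:
  assumes "group A"
  shows "group (rwreath A)"
proof -
  interpret A: group A by fact
  show ?thesis
  proof (rule groupI)
    fix x y
    assume x: "x \<in> carrier (rwreath A)" and y: "y \<in> carrier (rwreath A)"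
    obtain f m g n where xy: "x = (f, m)" "y = (g, n)"
      by (cases x, cases y) auto
    have f: "\<forall>i. f i \<in> carrier A" "finite {i. f i \<noteq> \<one>\<^bsub>A\<^esub>}"
      and g: "\<forall>i. g i \<in> carrier A" "finite {i. g (i - m) \<noteq> \<one>\<^bsub>A\<^esub>}"
      using x y finite_support_shift by (auto simp: xy rwreath_carrier)
    have "{i. f i \<otimes>\<^bsub>A\<^esub> g (i - m) \<noteq> \<one>\<^bsub>A\<^esub>} \<subseteq> {i. f i \<noteq> \<one>\<^bsub>A\<^esub>} \<union> {i. g (i - m) \<noteq> \<one>\<^bsub>A\<^esub>}"
      using f g by auto
    then show "x \<otimes>\<^bsub>rwreath A\<^esub> y \<in> carrier (rwreath A)"
      using f g by (auto simp: xy rwreath_mult rwreath_carrier intro: finite_subset)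
  next
    fix x y z
    assume "x \<in> carrier (rwreath A)" "y \<in> carrier (rwreath A)" "z \<in> carrier (rwreath A)"
    then show "x \<otimes>\<^bsub>rwreath A\<^esub> y \<otimes>\<^bsub>rwreath A\<^esub> z = x \<otimes>\<^bsub>rwreath A\<^esub> (y \<otimes>\<^bsub>rwreath A\<^esub> z)"
      by (cases x, cases y, cases z) (simp add: rwreath_mult rwreath_carrier A.m_assoc algebra_simps)
  next
    fix x
    assume x: "x \<in> carrier (rwreath A)"
    obtain f m where f: "x = (f, m)" "\<forall>i. f i \<in> carrier A" "finite {i. f i \<noteq> \<one>\<^bsub>A\<^esub>}"
      using x by (cases x) (auto simp: rwreath_carrier)
    then show "\<one>\<^bsub>rwreath A\<^esub> \<otimes>\<^bsub>rwreath A\<^esub> x = x"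
      by (simp add: rwreath_mult rwreath_one)
    let ?y = "(\<lambda>i. inv\<^bsub>A\<^esub> f (i + m), - m)"
    have "{i. inv\<^bsub>A\<^esub> f (i + m) \<noteq> \<one>\<^bsub>A\<^esub>} = {i. f (i - - m) \<noteq> \<one>\<^bsub>A\<^esub>}"
      using f by (auto simp: A.inv_eq_1_iff)
    then have "?y \<in> carrier (rwreath A)"
      using f finite_support_shift[OF f(3), of "- m"] by (simp add: rwreath_carrier)
    moreover have "?y \<otimes>\<^bsub>rwreath A\<^esub> x = \<one>\<^bsub>rwreath A\<^esub>"
      using f by (simp add: rwreath_mult rwreath_one)
    ultimately show "\<exists>y\<in>carrier (rwreath A). y \<otimes>\<^bsub>rwreath A\<^esub> x = \<one>\<^bsub>rwreath A\<^esub>"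
      by blast
  qed (simp add: rwreath_one rwreath_carrier)
qed

lemma inj_on_WT: "inj_on (\<lambda>(f, m). WT f m) S"
  by (auto simp: inj_on_def)

lemma group_W: "group (W i)"
  by (induction i) (auto intro!: group_transport group_rwreath inj_on_WT groupI)

interpretation W: group "W i" for i
  by (rule group_W)

declare W.simps(2) [simp del]

lemma W_Suc_carrier:
  "WT f m \<in> carrier (W (Suc i)) \<longleftrightarrow> (\<forall>j. f j \<in> carrier (W i)) \<and> finite {j. f j \<noteq> \<one>\<^bsub>W i\<^esub>}"
  by (force simp: W.simps transport_carrier rwreath_carrier)

lemma W_SucE:
  assumes "x \<in> carrier (W (Suc i))"
  obtains f m where "x = WT f m" "\<forall>j. f j \<in> carrier (W i)" "finite {j. f j \<noteq> \<one>\<^bsub>W i\<^esub>}"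
  using assms by (auto simp: W.simps transport_carrier rwreath_carrier)

lemma W_Suc_one: "\<one>\<^bsub>W (Suc i)\<^esub> = WT (\<lambda>_. \<one>\<^bsub>W i\<^esub>) 0"
  by (simp add: W.simps transport_one rwreath_one)

lemma W_Suc_mult:
  assumes "WT f m \<in> carrier (W (Suc i))" "WT g n \<in> carrier (W (Suc i))"
  shows "WT f m \<otimes>\<^bsub>W (Suc i)\<^esub> WT g n = WT (\<lambda>j. f j \<otimes>\<^bsub>W i\<^esub> g (j - m)) (m + n)"
proof -
  have "(f, m) \<in> carrier (rwreath (W i))" "(g, n) \<in> carrier (rwreath (W i))"
    using assms by (simp_all add: W_Suc_carrier rwreath_carrier)
  from transport_mult[OF inj_on_WT this] show ?thesis
    by (simp add: W.simps rwreath_mult)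
qed

lemma W_emb_hom: "W_emb i \<in> hom (W i) (W (Suc i))"
proof (rule homI)
  fix x y
  assume x: "x \<in> carrier (W i)" and y: "y \<in> carrier (W i)"
  have fin: "finite {k :: int. (if k = 0 then a else \<one>\<^bsub>W i\<^esub>) \<noteq> \<one>\<^bsub>W i\<^esub>}" for a
    by (rule finite_subset[of _ "{0}"]) auto
  show "W_emb i x \<in> carrier (W (Suc i))"
    using x fin by (simp add: W_emb_def W_Suc_carrier)
  show "W_emb i (x \<otimes>\<^bsub>W i\<^esub> y) = W_emb i x \<otimes>\<^bsub>W (Suc i)\<^esub> W_emb i y"
    using x y fin by (simp add: W_emb_def W_Suc_carrier W_Suc_mult fun_eq_iff)
qed

section \<open>Embedding into (Z wr)^\<infinity>\<close>

lemma Wsum_carrier: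
  "x \<in> carrier Wsum \<longleftrightarrow> (\<forall>i. x i \<in> carrier (W i)) \<and> finite {i. x i \<noteq> \<one>\<^bsub>W i\<^esub>}"
  by (simp add: Wsum_def carrier_sum_group group_W PiE_def Pi_iff)

lemma Wsum_mult: "x \<otimes>\<^bsub>Wsum\<^esub> y = (\<lambda>i. x i \<otimes>\<^bsub>W i\<^esub> y i)"
  by (simp add: Wsum_def restrict_UNIV)

lemma group_Wsum: "group Wsum"
  by (simp add: Wsum_def group_W)

lemma Wsum_eventually_one: "x \<in> carrier Wsum \<Longrightarrow> \<forall>\<^sub>F i in sequentially. x i = \<one>\<^bsub>W i\<^esub>"
  by (simp add: Wsum_carrier eventually_cofinite flip: cofinite_eq_sequentially)

lemma fun_eq_if_eventually_agree_below:
  assumes "\<forall>\<^sub>F n in sequentially. \<forall>j<n. x j = y j"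
  shows "x = y"
proof
  fix j
  obtain N where "\<And>n. N \<le> n \<Longrightarrow> \<forall>j<n. x j = y j"
    using assms by (auto simp: eventually_sequentially)
  from this[of "N + Suc j"] show "x j = y j"
    by simp
qed

fun Wsum_to_W :: "nat \<Rightarrow> (nat \<Rightarrow> wt) \<Rightarrow> wt" where
  "Wsum_to_W 0 x = WOne"
| "Wsum_to_W (Suc n) x = WT (\<lambda>k. if k = 0 then Wsum_to_W n x else if k = 1 then x n else \<one>\<^bsub>W n\<^esub>) 0"

lemma Wsum_to_W_hom: "Wsum_to_W n \<in> hom Wsum (W n)"
proof (induction n)
  case 0
  show ?case
    by (rule homI) simp_all
next
  case (Suc n)
  have fin: "finite {k :: int. (if k = 0 then a else if k = 1 then b else \<one>\<^bsub>W n\<^esub>) \<noteq> \<one>\<^bsub>W n\<^esub>}" for a b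
    by (rule finite_subset[of _ "{0, 1}"]) auto
  show ?case
  proof (rule homI)
    fix x y
    assume x: "x \<in> carrier Wsum" and y: "y \<in> carrier Wsum"
    then have "x n \<in> carrier (W n)" "y n \<in> carrier (W n)"
      by (simp_all add: Wsum_carrier)
    with x y fin hom_in_carrier[OF Suc.IH] hom_mult[OF Suc.IH] show
      "Wsum_to_W (Suc n) x \<in> carrier (W (Suc n))"
      "Wsum_to_W (Suc n) (x \<otimes>\<^bsub>Wsum\<^esub> y) = Wsum_to_W (Suc n) x \<otimes>\<^bsub>W (Suc n)\<^esub> Wsum_to_W (Suc n) y"
      by (simp_all add: W_Suc_carrier W_Suc_mult Wsum_mult fun_eq_iff)
  qed
qed

lemma Wsum_to_W_eventually_W_emb:
  "x \<in> carrier Wsum \<Longrightarrow> \<forall>\<^sub>F n in sequentially. Wsum_to_W (Suc n) x = W_emb n (Wsum_to_W n x)"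
  by (rule eventually_mono[OF Wsum_eventually_one]) (auto simp: W_emb_def fun_eq_iff)

lemma Wsum_to_W_eqD: "Wsum_to_W n x = Wsum_to_W n y \<Longrightarrow> j < n \<Longrightarrow> x j = y j"
proof (induction n)
  case (Suc n)
  then show ?case
    by (auto simp: fun_eq_iff less_Suc_eq dest: spec[of _ "0 :: int"] spec[of _ "1 :: int"])
qed simp

theorem Wsum_embeds_in_Zwr_inf: "\<exists>h. h \<in> mon Wsum Zwr_inf"
  unfolding Zwr_inf_def
proof (rule mon_dirlimI[where \<phi> = Wsum_to_W])
  show "monoid (W i)" for i
    by (rule W.is_monoid)
  show "W_emb i \<in> hom (W i) (W (Suc i))" for i
    by (rule W_emb_hom)
  show "monoid Wsum"
    by (rule group.is_monoid[OF group_Wsum])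
  show "Wsum_to_W n \<in> hom Wsum (W n)" for n
    by (rule Wsum_to_W_hom)
  show "\<forall>\<^sub>F n in sequentially. Wsum_to_W (Suc n) x = W_emb n (Wsum_to_W n x)" if "x \<in> carrier Wsum" for x
    using that by (rule Wsum_to_W_eventually_W_emb)
next
  fix x y
  assume "\<forall>\<^sub>F n in sequentially. Wsum_to_W n x = Wsum_to_W n y"
  then have "\<forall>\<^sub>F n in sequentially. \<forall>j<n. x j = y j"
    by (elim eventually_mono) (auto intro: Wsum_to_W_eqD)
  then show "x = y"
    by (rule fun_eq_if_eventually_agree_below)
qed

section \<open>The permutation groups P_k\<close>

lemma BijGroup_mult: "g \<in> Bij S \<Longrightarrow> h \<in> Bij S \<Longrightarrow> g \<otimes>\<^bsub>BijGroup S\<^esub> h = compose S g h"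
  by (simp add: BijGroup_def)

lemma hom_BijGroupI:
  assumes extensional: "\<And>g. g \<in> Bij S \<Longrightarrow> \<Phi> g \<in> extensional T"
    and maps_to: "\<And>g x. g \<in> Bij S \<Longrightarrow> x \<in> T \<Longrightarrow> \<Phi> g x \<in> T"
    and hom_compose: "\<And>g h. g \<in> Bij S \<Longrightarrow> h \<in> Bij S \<Longrightarrow> \<Phi> (compose S g h) = compose T (\<Phi> g) (\<Phi> h)"
    and hom_id: "\<Phi> (\<lambda>x\<in>S. x) = (\<lambda>x\<in>T. x)"
  shows "\<Phi> \<in> hom (BijGroup S) (BijGroup T)"
proof -
  have inverse: "\<Phi> g' (\<Phi> g x) = x"
    if "g \<in> Bij S" "g' \<in> Bij S" "compose S g' g = (\<lambda>x\<in>S. x)" "x \<in> T" for g g' x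
    using fun_cong[OF hom_compose[OF that(2,1)], of x] that(3,4) by (simp add: hom_id compose_def)
  have "\<Phi> g \<in> Bij T" if g: "g \<in> Bij S" for g
  proof -
    let ?g' = "\<lambda>x\<in>S. inv_into S g x"
    have bij: "bij_betw g S S"
      using g by (simp add: Bij_def)
    have "compose S ?g' g = (\<lambda>x\<in>S. x)" "compose S g ?g' = (\<lambda>x\<in>S. x)"
      using compose_inv_into_id[OF bij] compose_id_inv_into[of g S S] bij by (simp_all add: bij_betw_def)
    then have "bij_betw (\<Phi> g) T T"
      using inverse[OF g restrict_inv_into_Bij[OF g]] inverse[OF restrict_inv_into_Bij[OF g] g] maps_to
        restrict_inv_into_Bij[OF g] g
      by (intro bij_betw_byWitness[where f' = "\<Phi> ?g'"]) auto
    then show ?thesis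
      using extensional[OF g] by (simp add: Bij_def)
  qed
  then show ?thesis
    using hom_compose by (intro homI) (simp_all add: BijGroup_def compose_Bij)
qed

lemma pts_iff [simp]: "v \<in> pts k \<longleftrightarrow> length v = k"
  by (simp add: pts_def)

lemma length_Suc_Suc_conv_snoc:
  assumes "length v = Suc (Suc n)"
  obtains a w b where "v = a # w @ [b]" "length w = n"
proof -
  obtain a t where "v = a # t"
    using assms by (cases v) auto
  moreover obtain w b where "t = w @ [b]"
    using assms \<open>v = a # t\<close> by (cases t rule: rev_cases) auto
  ultimately show thesis
    using that assms by simp
qed

lemma pw_top_compose:
  assumes "h \<in> Bij (pts k)"
  shows "pw_top k (compose (pts k) g h) = compose (pts (Suc k)) (pw_top k g) (pw_top k h)"
proof
  fix v
  show "pw_top k (compose (pts k) g h) v = compose (pts (Suc k)) (pw_top k g) (pw_top k h) v"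
    using funcset_mem[OF Bij_imp_funcset[OF assms], of "tl v"] by (simp add: pw_top_def compose_def)
qed

lemma pw_top_hom: "pw_top k \<in> hom (BijGroup (pts k)) (BijGroup (pts (Suc k)))"
proof (rule hom_BijGroupI)
  show "pw_top k g v \<in> pts (Suc k)" if "g \<in> Bij (pts k)" "v \<in> pts (Suc k)" for g v
    using Bij_imp_funcset[OF that(1)] that(2) by (auto simp: pw_top_def Pi_iff)
  show "pw_top k (\<lambda>x\<in>pts k. x) = (\<lambda>x\<in>pts (Suc k). x)"
  proof
    fix v
    show "pw_top k (\<lambda>x\<in>pts k. x) v = (\<lambda>x\<in>pts (Suc k). x) v"
      by (cases v) (auto simp: pw_top_def)
  qed
qed (simp_all add: pw_top_compose, simp add: pw_top_def)

definition on_fibre :: "nat \<Rightarrow> int \<Rightarrow> (int list \<Rightarrow> int list) \<Rightarrow> int list \<Rightarrow> int list" where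
  "on_fibre k c g = (\<lambda>v\<in>pts (Suc k). if last v = c then g (butlast v) @ [c] else v)"

lemma on_fibre_id: "on_fibre k c (\<lambda>v\<in>pts k. v) = (\<lambda>v\<in>pts (Suc k). v)"
proof
  fix v
  show "on_fibre k c (\<lambda>v\<in>pts k. v) v = (\<lambda>v\<in>pts (Suc k). v) v"
    by (cases v rule: rev_cases) (auto simp: on_fibre_def)
qed

lemma on_fibre_hom: "on_fibre k c \<in> hom (BijGroup (pts k)) (BijGroup (pts (Suc k)))"
proof (rule hom_BijGroupI)
  show "on_fibre k c g v \<in> pts (Suc k)" if "g \<in> Bij (pts k)" "v \<in> pts (Suc k)" for g v
    using Bij_imp_funcset[OF that(1)] that(2) by (auto simp: on_fibre_def Pi_iff)
  show "on_fibre k c (compose (pts k) g h) = compose (pts (Suc k)) (on_fibre k c g) (on_fibre k c h)"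
    if "h \<in> Bij (pts k)" for g h
  proof
    fix v
    show "on_fibre k c (compose (pts k) g h) v = compose (pts (Suc k)) (on_fibre k c g) (on_fibre k c h) v"
    proof (cases "length v = Suc k")
      case True
      then have "butlast v \<in> pts k"
        by simp
      then have "h (butlast v) \<in> pts k"
        using Bij_imp_funcset[OF that] by blast
      with True show ?thesis
        by (simp add: on_fibre_def compose_def)
    qed (simp add: on_fibre_def compose_def)
  qed
qed (simp_all add: on_fibre_id, simp add: on_fibre_def)

definition transl :: "int \<Rightarrow> int list \<Rightarrow> int list" where
  "transl c = (\<lambda>v\<in>pts (Suc 0). [hd v + c])"

lemma P_Suc_0: "P (Suc 0) = range transl"
  by (auto simp: transl_def)

declare P.simps(2,3) [simp del]

lemma transl_Bij: "transl c \<in> Bij (pts (Suc 0))"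
proof -
  have "bij_betw (transl c) (pts (Suc 0)) (pts (Suc 0))"
    by (rule bij_betw_byWitness[where f' = "transl (- c)"]) (auto simp: transl_def length_Suc_conv)
  then show ?thesis
    by (simp add: Bij_def transl_def)
qed

lemma compose_transl: "compose (pts (Suc 0)) (transl c) (transl d) = transl (c + d)"
  by (auto simp: fun_eq_iff transl_def compose_def algebra_simps)

lemma transl_0: "transl 0 = (\<lambda>v\<in>pts (Suc 0). v)"
proof
  fix v
  show "transl 0 v = (\<lambda>v\<in>pts (Suc 0). v) v"
    by (cases v) (auto simp: transl_def)
qed

lemma subgroup_P_Suc_0: "subgroup (P (Suc 0)) (BijGroup (pts (Suc 0)))"
proof -
  interpret B: group "BijGroup (pts (Suc 0))"
    by (rule group_BijGroup)
  have inv_transl: "inv\<^bsub>BijGroup (pts (Suc 0))\<^esub> transl c = transl (- c)" for c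
    using transl_Bij by (intro B.inv_equality) (simp_all add: BijGroup_def compose_transl transl_0)
  have "subgroup (range transl) (BijGroup (pts (Suc 0)))"
  proof (rule B.subgroupI)
    show "range transl \<subseteq> carrier (BijGroup (pts (Suc 0)))"
      using transl_Bij by (auto simp: BijGroup_def)
    fix a b
    assume "a \<in> range transl" "b \<in> range transl"
    then obtain c d where "a = transl c" "b = transl d"
      by blast
    then show "inv\<^bsub>BijGroup (pts (Suc 0))\<^esub> a \<in> range transl"
      and "a \<otimes>\<^bsub>BijGroup (pts (Suc 0))\<^esub> b \<in> range transl"
      by (simp_all only: inv_transl BijGroup_mult[OF transl_Bij transl_Bij] compose_transl rangeI)
  qed simp
  then show ?thesis
    by (simp only: P_Suc_0)
qed

lemma subgroup_P: "subgroup (P (Suc k)) (BijGroup (pts (Suc k)))"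
proof (induction k)
  case 0
  show ?case
    by (rule subgroup_P_Suc_0)
next
  case (Suc k)
  have "pw_top (Suc k) ` P (Suc k) \<subseteq> carrier (BijGroup (pts (Suc (Suc k))))"
    using hom_in_carrier[OF pw_top_hom] subgroup.subset[OF Suc] by blast
  moreover have "pw_base (Suc k) c y \<in> carrier (BijGroup (pts (Suc (Suc k))))" for c y
  proof -
    have "bij_betw (pw_base (Suc k) c y) (pts (Suc (Suc k))) (pts (Suc (Suc k)))"
      by (rule bij_betw_byWitness[where f' = "pw_base (Suc k) (- c) y"]) (auto simp: pw_base_def length_Suc_conv)
    then show ?thesis
      by (simp add: BijGroup_def Bij_def pw_base_def)
  qed
  ultimately show ?case
    unfolding P.simps pwr_Z_def by (intro group.generate_is_subgroup[OF group_BijGroup]) blast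
qed

lemma P_Suc_Bij: "g \<in> P (Suc k) \<Longrightarrow> g \<in> Bij (pts (Suc k))"
  using subgroup.subset[OF subgroup_P] by (auto simp: BijGroup_def)

lemma P_Suc_compose: "g \<in> P (Suc k) \<Longrightarrow> h \<in> P (Suc k) \<Longrightarrow> compose (pts (Suc k)) g h \<in> P (Suc k)"
  using subgroup.m_closed[OF subgroup_P] P_Suc_Bij by (simp add: BijGroup_mult)

lemma P_Suc_id: "(\<lambda>v\<in>pts (Suc k). v) \<in> P (Suc k)"
  using subgroup.one_closed[OF subgroup_P] by (simp add: BijGroup_def)

lemma pw_top_in_P: "l \<in> P (Suc k) \<Longrightarrow> pw_top (Suc k) l \<in> P (Suc (Suc k))"
  unfolding P.simps pwr_Z_def by (rule generate.incl) blast

lemma pw_base_in_P: "y \<in> pts (Suc k) \<Longrightarrow> pw_base (Suc k) c y \<in> P (Suc (Suc k))"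
  unfolding P.simps pwr_Z_def by (rule generate.incl) blast

lemma P_grp_carrier [simp]: "carrier (P_grp k) = P k"
  by (simp add: P_grp_def)

lemma group_P_grp: "group (P_grp (Suc k))"
  unfolding P_grp_def by (rule subgroup.subgroup_is_group[OF subgroup_P group_BijGroup])

lemma P_grp_mult: "g \<in> P (Suc k) \<Longrightarrow> h \<in> P (Suc k) \<Longrightarrow> g \<otimes>\<^bsub>P_grp (Suc k)\<^esub> h = compose (pts (Suc k)) g h"
  using P_Suc_Bij by (simp add: P_grp_def BijGroup_mult)

lemma pw_top_P_grp_hom: "pw_top (Suc k) \<in> hom (P_grp (Suc k)) (P_grp (Suc (Suc k)))"
proof (rule homI)
  fix g h
  assume "g \<in> carrier (P_grp (Suc k))" "h \<in> carrier (P_grp (Suc k))"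
  then have g: "g \<in> P (Suc k)" and h: "h \<in> P (Suc k)"
    by simp_all
  then show "pw_top (Suc k) g \<in> carrier (P_grp (Suc (Suc k)))"
    by (simp add: pw_top_in_P)
  show "pw_top (Suc k) (g \<otimes>\<^bsub>P_grp (Suc k)\<^esub> h) = pw_top (Suc k) g \<otimes>\<^bsub>P_grp (Suc (Suc k))\<^esub> pw_top (Suc k) h"
    using g h by (simp add: P_grp_mult pw_top_in_P pw_top_compose P_Suc_Bij)
qed

lemma on_fibre_transl: "on_fibre (Suc 0) c (transl d) = pw_base (Suc 0) d [c]"
proof
  fix v
  show "on_fibre (Suc 0) c (transl d) v = pw_base (Suc 0) d [c] v"
  proof (cases "length v = Suc (Suc 0)")
    case True
    then obtain a w b where "v = a # w @ [b]" "length w = 0"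
      by (rule length_Suc_Suc_conv_snoc)
    then show ?thesis
      by (auto simp: on_fibre_def pw_base_def transl_def)
  qed (simp add: on_fibre_def pw_base_def)
qed

lemma on_fibre_pw_base:
  assumes "y \<in> pts (Suc k)"
  shows "on_fibre (Suc (Suc k)) c (pw_base (Suc k) d y) = pw_base (Suc (Suc k)) d (y @ [c])"
proof
  fix v
  show "on_fibre (Suc (Suc k)) c (pw_base (Suc k) d y) v = pw_base (Suc (Suc k)) d (y @ [c]) v"
  proof (cases "length v = Suc (Suc (Suc k))")
    case True
    then obtain a w b where "v = a # w @ [b]" "length w = Suc k"
      by (rule length_Suc_Suc_conv_snoc)
    then show ?thesis
      using assms by (auto simp: on_fibre_def pw_base_def)
  qed (simp add: on_fibre_def pw_base_def)
qed

lemma on_fibre_pw_top: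
  "on_fibre (Suc (Suc k)) c (pw_top (Suc k) l) = pw_top (Suc (Suc k)) (on_fibre (Suc k) c l)"
proof
  fix v
  show "on_fibre (Suc (Suc k)) c (pw_top (Suc k) l) v = pw_top (Suc (Suc k)) (on_fibre (Suc k) c l) v"
  proof (cases "length v = Suc (Suc (Suc k))")
    case True
    then obtain a w b where "v = a # w @ [b]" "length w = Suc k"
      by (rule length_Suc_Suc_conv_snoc)
    then show ?thesis
      by (auto simp: on_fibre_def pw_top_def)
  qed (simp add: on_fibre_def pw_top_def)
qed

lemma on_fibre_in_P_Suc: "l \<in> P (Suc k) \<Longrightarrow> on_fibre (Suc k) c l \<in> P (Suc (Suc k))"
proof (induction k arbitrary: l)
  case 0
  then obtain d where "l = transl d"
    by (auto simp: P_Suc_0)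
  then show ?case
    using pw_base_in_P[of "[c]" 0 d] by (simp add: on_fibre_transl)
next
  case (Suc k)
  let ?B = "BijGroup (pts (Suc (Suc k)))"
  let ?gens = "{pw_base (Suc k) d y | d y. y \<in> pts (Suc k)} \<union> pw_top (Suc k) ` P (Suc k)"
  \<comment> \<open>on_fibre is a homomorphism, so it suffices to map the generators of P (k + 2) into P (k + 3)\<close>
  interpret on_fibre: group_hom ?B "BijGroup (pts (Suc (Suc (Suc k))))" "on_fibre (Suc (Suc k)) c"
    by (simp add: group_hom_def group_hom_axioms_def group_BijGroup on_fibre_hom)
  have "?gens \<subseteq> P (Suc (Suc k))"
    using pw_base_in_P pw_top_in_P by blast
  then have gens: "?gens \<subseteq> carrier ?B"
    using subgroup.subset[OF subgroup_P] by blast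
  have "on_fibre (Suc (Suc k)) c ` ?gens \<subseteq> P (Suc (Suc (Suc k)))"
    using pw_base_in_P pw_top_in_P Suc.IH by (auto simp: on_fibre_pw_base on_fibre_pw_top)
  then have "generate (BijGroup (pts (Suc (Suc (Suc k))))) (on_fibre (Suc (Suc k)) c ` ?gens)
      \<subseteq> P (Suc (Suc (Suc k)))"
    by (rule group.generate_subgroup_incl[OF group_BijGroup _ subgroup_P])
  then show ?case
    using Suc.prems on_fibre.generate_img[OF gens] by (auto simp: P.simps(3) pwr_Z_def)
qed

lemma on_fibre_in_P: "l \<in> P k \<Longrightarrow> on_fibre k c l \<in> P (Suc k)"
  by (cases k) (simp_all add: on_fibre_id P_Suc_id on_fibre_in_P_Suc)

definition shift_last :: "nat \<Rightarrow> int \<Rightarrow> int list \<Rightarrow> int list" where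
  "shift_last k m = (\<lambda>v\<in>pts k. butlast v @ [last v + m])"

lemma shift_last_in_P: "shift_last (Suc k) m \<in> P (Suc k)"
proof (induction k)
  case 0
  have "shift_last (Suc 0) m = transl m"
  proof
    fix v
    show "shift_last (Suc 0) m v = transl m v"
      by (cases v) (auto simp: shift_last_def transl_def)
  qed
  then show ?case
    by (simp add: P_Suc_0)
next
  case (Suc k)
  have "shift_last (Suc (Suc k)) m = pw_top (Suc k) (shift_last (Suc k) m)"
  proof
    fix v
    show "shift_last (Suc (Suc k)) m v = pw_top (Suc k) (shift_last (Suc k) m) v"
    proof (cases "length v = Suc (Suc k)")
      case True
      then obtain a w b where "v = a # w @ [b]" "length w = k"
        by (rule length_Suc_Suc_conv_snoc)
      then show ?thesis
        by (simp add: shift_last_def pw_top_def butlast_append)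
    qed (simp add: shift_last_def pw_top_def)
  qed
  then show ?case
    using pw_top_in_P[OF Suc.IH] by simp
qed

section \<open>Embedding into (wr Z)^\<infinity>\<close>

fun W_action :: "nat \<Rightarrow> wt \<Rightarrow> int list \<Rightarrow> int list" where
  "W_action 0 x = (\<lambda>v\<in>pts 0. v)"
| "W_action (Suc i) (WT f m) = (\<lambda>v\<in>pts (Suc i). W_action i (f (last v + m)) (butlast v) @ [last v + m])"
| "W_action (Suc i) WOne = (\<lambda>v. v)"  (* junk: WOne lies in no carrier W (Suc i) *)

lemma W_action_in_pts: "x \<in> carrier (W i) \<Longrightarrow> v \<in> pts i \<Longrightarrow> W_action i x v \<in> pts i"
proof (induction i arbitrary: x v)
  case (Suc i)
  then obtain f m where "x = WT f m" "\<forall>j. f j \<in> carrier (W i)"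
    by (auto elim: W_SucE)
  with Suc show ?case
    by simp
qed simp

lemma W_action_extensional: "x \<in> carrier (W i) \<Longrightarrow> W_action i x \<in> extensional (pts i)"
  by (cases i) (auto elim: W_SucE)

lemma W_action_one: "W_action i \<one>\<^bsub>W i\<^esub> = (\<lambda>v\<in>pts i. v)"
proof (induction i)
  case (Suc i)
  show ?case
  proof
    fix v
    show "W_action (Suc i) \<one>\<^bsub>W (Suc i)\<^esub> v = (\<lambda>v\<in>pts (Suc i). v) v"
      using Suc by (cases v rule: rev_cases) (auto simp: W_Suc_one)
  qed
qed simp

lemma W_action_mult:
  assumes "x \<in> carrier (W i)" "y \<in> carrier (W i)"
  shows "W_action i (x \<otimes>\<^bsub>W i\<^esub> y) = compose (pts i) (W_action i x) (W_action i y)"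
  using assms
proof (induction i arbitrary: x y)
  case 0
  then show ?case
    by (auto simp: compose_def)
next
  case (Suc i)
  obtain f m where x: "x = WT f m" "\<forall>j. f j \<in> carrier (W i)"
    using Suc.prems(1) by (auto elim: W_SucE)
  obtain g n where y: "y = WT g n" "\<forall>j. g j \<in> carrier (W i)"
    using Suc.prems(2) by (auto elim: W_SucE)
  show ?case
  proof
    fix v
    show "W_action (Suc i) (x \<otimes>\<^bsub>W (Suc i)\<^esub> y) v = compose (pts (Suc i)) (W_action (Suc i) x) (W_action (Suc i) y) v"
    proof (cases "length v = Suc i")
      case True
      then obtain u c where v: "v = u @ [c]" "length u = i"
        by (cases v rule: rev_cases) auto
      have "W_action i (g (c + n)) u \<in> pts i"
        using W_action_in_pts y v by simp
      then show ?thesis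
        using Suc.IH[of "f (c + (m + n))" "g (c + n)"] Suc.prems x y v
        by (simp add: W_Suc_mult compose_def algebra_simps)
    qed (use Suc.prems x y in \<open>simp add: W_Suc_mult compose_def\<close>)
  qed
qed

lemma W_action_inj:
  assumes "x \<in> carrier (W i)" "y \<in> carrier (W i)" "W_action i x = W_action i y"
  shows "x = y"
  using assms
proof (induction i arbitrary: x y)
  case (Suc i)
  obtain f m where x: "x = WT f m" "\<forall>j. f j \<in> carrier (W i)"
    using Suc.prems(1) by (auto elim: W_SucE)
  obtain g n where y: "y = WT g n" "\<forall>j. g j \<in> carrier (W i)"
    using Suc.prems(2) by (auto elim: W_SucE)
  have on_fibre: "W_action i (f c) w @ [c] = W_action i (g (c - m + n)) w @ [c - m + n]"
    if "w \<in> pts i" for c w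
    using fun_cong[OF Suc.prems(3), of "w @ [c - m]"] x y that by simp
  have "m = n"
    using on_fibre[of "replicate i 0" 0] by simp
  have "W_action i (f c) = W_action i (g c)" for c
  proof (rule extensionalityI[OF W_action_extensional W_action_extensional])
    show "W_action i (f c) w = W_action i (g c) w" if "w \<in> pts i" for w
      using on_fibre[OF that, of c] \<open>m = n\<close> by simp
  qed (use x y in auto)
  then have "f = g"
    using Suc.IH x y by blast
  with \<open>m = n\<close> show ?case
    using x y by simp
qed simp

lemma W_action_shift: "W_action (Suc i) (WT (\<lambda>_. \<one>\<^bsub>W i\<^esub>) m) = shift_last (Suc i) m"
  by (auto simp: fun_eq_iff W_action_one shift_last_def)

lemma W_action_single:
  "W_action (Suc i) (WT (\<lambda>j. if j = d then a else \<one>\<^bsub>W i\<^esub>) 0) = on_fibre i d (W_action i a)"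
proof
  fix v
  show "W_action (Suc i) (WT (\<lambda>j. if j = d then a else \<one>\<^bsub>W i\<^esub>) 0) v = on_fibre i d (W_action i a) v"
    by (cases v rule: rev_cases) (auto simp: on_fibre_def W_action_one)
qed

lemma W_action_base_in_P:
  assumes action_in_P: "\<And>a. a \<in> carrier (W i) \<Longrightarrow> W_action i a \<in> P i"
    and "finite F" "\<forall>j. f j \<in> carrier (W i)" "{j. f j \<noteq> \<one>\<^bsub>W i\<^esub>} \<subseteq> F"
  shows "W_action (Suc i) (WT f 0) \<in> P (Suc i)"
  using assms(2-4)
proof (induction F arbitrary: f rule: finite_induct)
  case empty
  then have "WT f 0 = \<one>\<^bsub>W (Suc i)\<^esub>"
    by (auto simp: W_Suc_one fun_eq_iff)
  then show ?case
    by (metis W_action_one P_Suc_id)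
next
  case (insert d F)
  define g where "g = f(d := \<one>\<^bsub>W i\<^esub>)"
  define s where "s = (\<lambda>j. if j = d then f d else \<one>\<^bsub>W i\<^esub>)"
  have g: "\<forall>j. g j \<in> carrier (W i)" "{j. g j \<noteq> \<one>\<^bsub>W i\<^esub>} \<subseteq> F"
    using insert.prems by (auto simp: g_def)
  have carrier: "WT g 0 \<in> carrier (W (Suc i))" "WT s 0 \<in> carrier (W (Suc i))"
    using g insert.prems finite_subset[OF g(2) insert.hyps(1)] finite_subset[of _ "{d}"]
    by (auto simp: W_Suc_carrier s_def)
  have "WT f 0 = WT g 0 \<otimes>\<^bsub>W (Suc i)\<^esub> WT s 0"
    using carrier insert.prems by (auto simp: W_Suc_mult fun_eq_iff g_def s_def)
  then have "W_action (Suc i) (WT f 0) = compose (pts (Suc i)) (W_action (Suc i) (WT g 0)) (W_action (Suc i) (WT s 0))"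
    using W_action_mult[OF carrier] by simp
  moreover have "W_action (Suc i) (WT s 0) \<in> P (Suc i)"
    unfolding s_def W_action_single using insert.prems action_in_P by (simp add: on_fibre_in_P)
  ultimately show ?case
    using insert.IH[OF g] P_Suc_compose by metis
qed

lemma W_action_in_P: "x \<in> carrier (W i) \<Longrightarrow> W_action i x \<in> P i"
proof (induction i arbitrary: x)
  case (Suc i)
  then obtain f m where f: "x = WT f m" "\<forall>j. f j \<in> carrier (W i)" "finite {j. f j \<noteq> \<one>\<^bsub>W i\<^esub>}"
    by (auto elim: W_SucE)
  have carrier: "WT f 0 \<in> carrier (W (Suc i))" "WT (\<lambda>_. \<one>\<^bsub>W i\<^esub>) m \<in> carrier (W (Suc i))"
    using f by (simp_all add: W_Suc_carrier)
  have factor: "x = WT f 0 \<otimes>\<^bsub>W (Suc i)\<^esub> WT (\<lambda>_. \<one>\<^bsub>W i\<^esub>) m"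
    using carrier f by (simp add: W_Suc_mult)
  have "W_action (Suc i) x = compose (pts (Suc i)) (W_action (Suc i) (WT f 0)) (shift_last (Suc i) m)"
    unfolding factor W_action_mult[OF carrier] W_action_shift ..
  then show ?case
    using W_action_base_in_P[OF Suc.IH _ f(2) subset_refl] f(3) shift_last_in_P
    by (simp add: P_Suc_compose)
qed simp

text \<open>The last coordinate i \<le> n of a point of Z^(n+1) selects the summand x i, which acts
  through W_action on the i coordinates preceding it; all other points are fixed.\<close>

definition Wsum_to_P :: "nat \<Rightarrow> (nat \<Rightarrow> wt) \<Rightarrow> int list \<Rightarrow> int list" where
  "Wsum_to_P n x = (\<lambda>v\<in>pts (Suc n). if 0 \<le> last v \<and> nat (last v) \<le> n
      then take (n - nat (last v)) (butlast v)
        @ W_action (nat (last v)) (x (nat (last v))) (drop (n - nat (last v)) (butlast v)) @ [last v]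
      else v)"

lemma Wsum_to_P_block:
  assumes "i \<le> n" "length u = n - i" "length w = i"
  shows "Wsum_to_P n x (u @ w @ [int i]) = u @ W_action i (x i) w @ [int i]"
  using assms by (simp add: Wsum_to_P_def butlast_append)

lemma Wsum_to_P_outside:
  assumes "length u = n" "c \<notin> {0..int n}"
  shows "Wsum_to_P n x (u @ [c]) = u @ [c]"
  using assms by (auto simp: Wsum_to_P_def)

lemma length_Suc_blockE:
  assumes "length v = Suc n"
  obtains (block) i u w where "v = u @ w @ [int i]" "i \<le> n" "length u = n - i" "length w = i"
    | (outside) u c where "v = u @ [c]" "length u = n" "c \<notin> {0..int n}"
proof -
  obtain u c where v: "v = u @ [c]" "length u = n"
    using assms by (cases v rule: rev_cases) auto
  show thesis
  proof (cases "c \<in> {0..int n}")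
    case True
    then have "c = int (nat c)" "nat c \<le> n"
      by auto
    then show thesis
      using block[of "take (n - nat c) u" "drop (n - nat c) u" "nat c"] v by simp
  qed (use outside v in blast)
qed

lemma Wsum_to_P_0: "Wsum_to_P 0 x = (\<lambda>v\<in>pts (Suc 0). v)"
proof
  fix v
  show "Wsum_to_P 0 x v = (\<lambda>v\<in>pts (Suc 0). v) v"
    by (cases v) (auto simp: Wsum_to_P_def)
qed

lemma Wsum_to_P_mult:
  assumes x: "x \<in> carrier Wsum" and y: "y \<in> carrier Wsum"
  shows "Wsum_to_P n (x \<otimes>\<^bsub>Wsum\<^esub> y) = compose (pts (Suc n)) (Wsum_to_P n x) (Wsum_to_P n y)"
proof
  fix v
  show "Wsum_to_P n (x \<otimes>\<^bsub>Wsum\<^esub> y) v = compose (pts (Suc n)) (Wsum_to_P n x) (Wsum_to_P n y) v"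
  proof (cases "length v = Suc n")
    case True
    then show ?thesis
    proof (cases rule: length_Suc_blockE)
      case (block i u w)
      have xy: "x i \<in> carrier (W i)" "y i \<in> carrier (W i)"
        using x y by (simp_all add: Wsum_carrier)
      have "length (W_action i (y i) w) = i"
        using W_action_in_pts[OF xy(2)] block by simp
      then show ?thesis
        using block xy by (simp add: Wsum_to_P_block Wsum_mult W_action_mult compose_def)
    next
      case (outside u c)
      then show ?thesis
        by (simp add: Wsum_to_P_outside compose_def)
    qed
  qed (simp add: Wsum_to_P_def compose_def)
qed

lemma Wsum_to_P_Cons:
  assumes "length u = n" "c \<noteq> int (Suc n)"
  shows "Wsum_to_P (Suc n) x (a # u @ [c]) = a # Wsum_to_P n x (u @ [c])"
  using assms by (auto simp: Wsum_to_P_def Suc_diff_le)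

lemma Wsum_to_P_Suc:
  assumes "x \<in> carrier Wsum"
  shows "Wsum_to_P (Suc n) x = compose (pts (Suc (Suc n)))
    (pw_top (Suc n) (Wsum_to_P n x)) (on_fibre (Suc n) (int (Suc n)) (W_action (Suc n) (x (Suc n))))"
proof
  fix v
  show "Wsum_to_P (Suc n) x v = compose (pts (Suc (Suc n)))
    (pw_top (Suc n) (Wsum_to_P n x)) (on_fibre (Suc n) (int (Suc n)) (W_action (Suc n) (x (Suc n)))) v"
  proof (cases "length v = Suc (Suc n)")
    case True
    then obtain a u c where v: "v = a # u @ [c]" "length u = n"
      by (rule length_Suc_Suc_conv_snoc)
    show ?thesis
    proof (cases "c = int (Suc n)")
      case True
      obtain b t where t: "W_action (Suc n) (x (Suc n)) (a # u) = b # t" "length t = n"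
        using W_action_in_pts[of "x (Suc n)" "Suc n" "a # u"] assms v
        by (auto simp: Wsum_carrier length_Suc_conv)
      have "Wsum_to_P (Suc n) x v = b # t @ [c]"
        using Wsum_to_P_block[of "Suc n" "Suc n" "[]" "a # u" x] v t True by simp
      moreover have "Wsum_to_P n x (t @ [c]) = t @ [c]"
        using Wsum_to_P_outside[of t n c x] t True by simp
      ultimately show ?thesis
        using v t True by (simp add: compose_def on_fibre_def pw_top_def)
    next
      case False
      with v show ?thesis
        by (simp add: Wsum_to_P_Cons compose_def on_fibre_def pw_top_def)
    qed
  qed (simp add: Wsum_to_P_def compose_def)
qed

lemma Wsum_to_P_in_P: "x \<in> carrier Wsum \<Longrightarrow> Wsum_to_P n x \<in> P (Suc n)"
proof (induction n)
  case 0
  show ?case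
    unfolding Wsum_to_P_0 by (rule P_Suc_id)
next
  case (Suc n)
  have "x (Suc n) \<in> carrier (W (Suc n))"
    using Suc.prems by (simp add: Wsum_carrier)
  then show ?case
    unfolding Wsum_to_P_Suc[OF Suc.prems]
    by (intro P_Suc_compose pw_top_in_P Suc.IH Suc.prems on_fibre_in_P W_action_in_P)
qed

lemma Wsum_to_P_hom: "Wsum_to_P n \<in> hom Wsum (P_grp (Suc n))"
  by (rule homI) (simp_all add: Wsum_to_P_in_P Wsum_to_P_mult P_grp_mult)

lemma Wsum_to_P_eventually_pw_top:
  assumes "x \<in> carrier Wsum"
  shows "\<forall>\<^sub>F n in sequentially. Wsum_to_P (Suc n) x = pw_top (Suc n) (Wsum_to_P n x)"
proof -
  have "\<forall>\<^sub>F n in sequentially. x (Suc n) = \<one>\<^bsub>W (Suc n)\<^esub>"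
    using Wsum_eventually_one[OF assms] eventually_sequentially_Suc[of "\<lambda>i. x i = \<one>\<^bsub>W i\<^esub>"]
    by simp
  then show ?thesis
  proof (rule eventually_mono)
    fix n
    assume "x (Suc n) = \<one>\<^bsub>W (Suc n)\<^esub>"
    moreover have "pw_top (Suc n) (Wsum_to_P n x) \<in> Bij (pts (Suc (Suc n)))"
      using P_Suc_Bij pw_top_in_P Wsum_to_P_in_P[OF assms] by blast
    note compose_Id[OF Bij_imp_funcset[OF this] Bij_imp_extensional[OF this]]
    ultimately show "Wsum_to_P (Suc n) x = pw_top (Suc n) (Wsum_to_P n x)"
      unfolding Wsum_to_P_Suc[OF assms] by (simp add: W_action_one on_fibre_id)
  qed
qed

lemma Wsum_to_P_eqD:
  assumes x: "x \<in> carrier Wsum" and y: "y \<in> carrier Wsum"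
    and "Wsum_to_P n x = Wsum_to_P n y" "j \<le> n"
  shows "x j = y j"
proof -
  have xy: "x j \<in> carrier (W j)" "y j \<in> carrier (W j)"
    using x y by (simp_all add: Wsum_carrier)
  have "W_action j (x j) w = W_action j (y j) w" if "w \<in> pts j" for w
    using fun_cong[OF assms(3), of "replicate (n - j) 0 @ w @ [int j]"] Wsum_to_P_block assms(4) that
    by simp
  then have "W_action j (x j) = W_action j (y j)"
    using extensionalityI[OF W_action_extensional[OF xy(1)] W_action_extensional[OF xy(2)]] by blast
  with xy show ?thesis
    by (rule W_action_inj)
qed

theorem Wsum_embeds_in_wrZ_inf: "\<exists>h. h \<in> mon Wsum wrZ_inf"
  unfolding wrZ_inf_def
proof (rule mon_dirlimI[where \<phi> = Wsum_to_P])
  show "monoid (P_grp (Suc k))" for k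
    by (rule group.is_monoid[OF group_P_grp])
  show "pw_top (Suc k) \<in> hom (P_grp (Suc k)) (P_grp (Suc (Suc k)))" for k
    by (rule pw_top_P_grp_hom)
  show "monoid Wsum"
    by (rule group.is_monoid[OF group_Wsum])
  show "Wsum_to_P n \<in> hom Wsum (P_grp (Suc n))" for n
    by (rule Wsum_to_P_hom)
  show "\<forall>\<^sub>F n in sequentially. Wsum_to_P (Suc n) x = pw_top (Suc n) (Wsum_to_P n x)" if "x \<in> carrier Wsum" for x
    using that by (rule Wsum_to_P_eventually_pw_top)
next
  fix x y
  assume x: "x \<in> carrier Wsum" and y: "y \<in> carrier Wsum"
    and "\<forall>\<^sub>F n in sequentially. Wsum_to_P n x = Wsum_to_P n y"
  then have "\<forall>\<^sub>F n in sequentially. \<forall>j<n. x j = y j"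
    by (elim eventually_mono) (auto intro: Wsum_to_P_eqD[OF x y])
  then show "x = y"
    by (rule fun_eq_if_eventually_agree_below)
qed

theorem lemma22:
  shows "(\<exists>h. h \<in> mon Wsum wrZ_inf) \<and> (\<exists>h. h \<in> mon Wsum Zwr_inf)"
  using Wsum_embeds_in_wrZ_inf Wsum_embeds_in_Zwr_inf by blast

end
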